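(* Let $G=(V,E)$ be a graph, let $H\subseteq G$ be a clique (complete subgraph), and let $G'=(V\cup\{v'\},E')$ be obtained by adding a new vertex $v'$ adjacent to every vertex of $H$ and to no other vertex of $G$. If $G'$ is generically globally rigid in $\mathbb{R}^d$, then $G$ is generically globally rigid in $\mathbb{R}^d$.
   Context: A framework is a pair $(G,\mathbf{p})$ with $\mathbf{p}:V\to\mathbb{R}^d$. Frameworks $(G,\mathbf{p})$, $(G,\mathbf{q})$ are equivalent if $\|\mathbf{p}(u)-\mathbf{p}(v)\|=\|\mathbf{q}(u)-\mathbf{q}(v)\|$ for every edge $(u,v)$, and congruent if this holds for all $u,v\in V$. $(G,\mathbf{p})$ is globally rigid if every framework equivalent to it is congruent to it. A configuration is generic if its coordinates satisfy no nontrivial polynomial equation with rational coefficients; $G$ is generically globally rigid in $\mathbb{R}^d$ if every generic $d$-dimensional framework of $G$ is globally rigid (global rigidity is known to be a generic property: either all or no generic configurations of a graph are globally rigid). *)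

theory Defs
  imports "HOL-Analysis.Analysis"
begin

definition simple_graph :: "'a set \<Rightarrow> 'a set set \<Rightarrow> bool" where
  "simple_graph V E \<longleftrightarrow> finite V \<and> (\<forall>e\<in>E. e \<subseteq> V \<and> card e = 2)"

text \<open>A polynomial is given by a finite set M of distinct exponent vectors
  supported in a finite set S of variables, with rational coefficients c.\<close>
definition alg_indep_over_rat :: "'i set \<Rightarrow> ('i \<Rightarrow> real) \<Rightarrow> bool" where
  "alg_indep_over_rat J x \<longleftrightarrow>
     (\<forall>S M (c :: ('i \<Rightarrow> nat) \<Rightarrow> rat).
        finite S \<and> S \<subseteq> J \<and> finite M \<and> (\<forall>m\<in>M. \<forall>j. j \<notin> S \<longrightarrow> m j = 0) \<and>
        (\<Sum>m\<in>M. of_rat (c m) * (\<Prod>j\<in>S. x j ^ m j)) = 0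
        \<longrightarrow> (\<forall>m\<in>M. c m = 0))"

definition generic_config :: "'a set \<Rightarrow> ('a \<Rightarrow> real ^ 'd) \<Rightarrow> bool" where
  "generic_config V p \<longleftrightarrow> alg_indep_over_rat (V \<times> UNIV) (\<lambda>(v, i). p v $ i)"

definition equivalent_frameworks ::
    "'a set set \<Rightarrow> ('a \<Rightarrow> real ^ 'd) \<Rightarrow> ('a \<Rightarrow> real ^ 'd) \<Rightarrow> bool" where
  "equivalent_frameworks E p q \<longleftrightarrow>
     (\<forall>u v. {u, v} \<in> E \<longrightarrow> dist (p u) (p v) = dist (q u) (q v))"

definition congruent_frameworks ::
    "'a set \<Rightarrow> ('a \<Rightarrow> real ^ 'd) \<Rightarrow> ('a \<Rightarrow> real ^ 'd) \<Rightarrow> bool" where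
  "congruent_frameworks V p q \<longleftrightarrow>
     (\<forall>u\<in>V. \<forall>v\<in>V. dist (p u) (p v) = dist (q u) (q v))"

definition globally_rigid ::
    "'a set \<Rightarrow> 'a set set \<Rightarrow> ('a \<Rightarrow> real ^ 'd) \<Rightarrow> bool" where
  "globally_rigid V E p \<longleftrightarrow>
     (\<forall>q :: 'a \<Rightarrow> real ^ 'd. equivalent_frameworks E p q \<longrightarrow> congruent_frameworks V p q)"

text \<open>Generic global rigidity in R^d, where d = CARD('d) is carried by the type.\<close>
definition gen_globally_rigid ::
    "'a set \<Rightarrow> 'a set set \<Rightarrow> ('d::finite) itself \<Rightarrow> bool" where
  "gen_globally_rigid V E (_ :: 'd itself) \<longleftrightarrow>
     (\<forall>p :: 'a \<Rightarrow> real ^ 'd. generic_config V p \<longrightarrow> globally_rigid V E p)"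

definition is_clique :: "'a set set \<Rightarrow> 'a set \<Rightarrow> bool" where
  "is_clique E H \<longleftrightarrow> (\<forall>u\<in>H. \<forall>v\<in>H. u \<noteq> v \<longrightarrow> {u, v} \<in> E)"

end

theory Submission
  imports Defs "HOL-Computational_Algebra.Polynomial"
begin

text \<open>Extend a generic configuration p of G to one of G' by placing v' at a point whose
  coordinates are algebraically independent over the field generated by those of p; this is
  possible because only countably many reals are algebraic over a countable field. The extended
  framework is generic, hence globally rigid. Given q equivalent to p, the clique H has the same
  pairwise distances under p and q, so a product of reflections is an isometry g of R^d with
  g (p h) = q h for every h in H. Placing v' at g z makes q a framework of G' equivalent to
  (G', p(v' := z)), hence congruent to it, and restricting to V shows q congruent to p.\<close>

definition monomial_value :: "'i set \<Rightarrow> ('i \<Rightarrow> real) \<Rightarrow> ('i \<Rightarrow> nat) \<Rightarrow> real" where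
  "monomial_value J x m = (\<Prod>j\<in>J. x j ^ m j)"

definition exponents_on :: "'i set \<Rightarrow> ('i \<Rightarrow> nat) set" where
  "exponents_on J = {m. \<forall>j. j \<notin> J \<longrightarrow> m j = 0}"

definition rat_poly_values :: "'i set \<Rightarrow> ('i \<Rightarrow> real) \<Rightarrow> real set" where
  "rat_poly_values J x =
     {\<Sum>m\<in>M. of_rat (c m) * monomial_value J x m | M c. finite M \<and> M \<subseteq> exponents_on J}"

lemma monomial_value_cong:
  "(\<And>j. j \<in> J \<Longrightarrow> x j = y j) \<Longrightarrow> monomial_value J x m = monomial_value J y m"
  unfolding monomial_value_def by (rule prod.cong) auto

lemma monomial_value_insert:
  "finite J \<Longrightarrow> k \<notin> J \<Longrightarrow> monomial_value (insert k J) x m = x k ^ m k * monomial_value J x m"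
  unfolding monomial_value_def by simp

lemma monomial_value_fun_upd_exponent:
  "k \<notin> J \<Longrightarrow> monomial_value J x (m(k := a)) = monomial_value J x m"
  unfolding monomial_value_def by (rule prod.cong) auto

lemma alg_indep_over_rat_iff:
  assumes "finite J"
  shows "alg_indep_over_rat J x \<longleftrightarrow>
    (\<forall>M c. finite M \<and> M \<subseteq> exponents_on J \<and>
       (\<Sum>m\<in>M. of_rat (c m) * monomial_value J x m) = 0 \<longrightarrow> (\<forall>m\<in>M. c m = (0::rat)))"
proof
  assume ind: "alg_indep_over_rat J x"
  show "\<forall>M c. finite M \<and> M \<subseteq> exponents_on J \<and>
      (\<Sum>m\<in>M. of_rat (c m) * monomial_value J x m) = 0 \<longrightarrow> (\<forall>m\<in>M. c m = 0)"
  proof (intro allI impI)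
    fix M and c :: "('a \<Rightarrow> nat) \<Rightarrow> rat"
    assume rel: "finite M \<and> M \<subseteq> exponents_on J \<and>
      (\<Sum>m\<in>M. of_rat (c m) * monomial_value J x m) = 0"
    have "finite J \<and> J \<subseteq> J \<and> finite M \<and> (\<forall>m\<in>M. \<forall>j. j \<notin> J \<longrightarrow> m j = 0) \<and>
      (\<Sum>m\<in>M. of_rat (c m) * (\<Prod>j\<in>J. x j ^ m j)) = 0"
      using rel assms unfolding exponents_on_def monomial_value_def by blast
    then show "\<forall>m\<in>M. c m = 0"
      using ind unfolding alg_indep_over_rat_def by blast
  qed
next
  assume rel: "\<forall>M c. finite M \<and> M \<subseteq> exponents_on J \<and>
      (\<Sum>m\<in>M. of_rat (c m) * monomial_value J x m) = 0 \<longrightarrow> (\<forall>m\<in>M. c m = (0::rat))"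
  show "alg_indep_over_rat J x"
    unfolding alg_indep_over_rat_def
  proof (intro allI impI)
    fix S M and c :: "('a \<Rightarrow> nat) \<Rightarrow> rat"
    assume rel_S: "finite S \<and> S \<subseteq> J \<and> finite M \<and> (\<forall>m\<in>M. \<forall>j. j \<notin> S \<longrightarrow> m j = 0) \<and>
      (\<Sum>m\<in>M. of_rat (c m) * (\<Prod>j\<in>S. x j ^ m j)) = 0"
    have "monomial_value J x m = (\<Prod>j\<in>S. x j ^ m j)" if "m \<in> M" for m
      unfolding monomial_value_def using rel_S that assms by (intro prod.mono_neutral_right) auto
    then have "(\<Sum>m\<in>M. of_rat (c m) * monomial_value J x m) = 0"
      using rel_S by simp
    moreover have "M \<subseteq> exponents_on J"
      using rel_S unfolding exponents_on_def by blast
    ultimately show "\<forall>m\<in>M. c m = 0"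
      using rel rel_S by blast
  qed
qed

lemma alg_indep_over_rat_cong:
  assumes "\<And>j. j \<in> J \<Longrightarrow> x j = y j"
  shows "alg_indep_over_rat J x = alg_indep_over_rat J y"
proof -
  have "\<And>S m. S \<subseteq> J \<Longrightarrow> (\<Prod>j\<in>S. x j ^ m j) = (\<Prod>j\<in>S. y j ^ m j)"
    using assms by (intro prod.cong) auto
  then show ?thesis
    unfolding alg_indep_over_rat_def by (smt (verit) sum.cong)
qed

lemma countable_exponents_on:
  assumes "finite J"
  shows "countable (exponents_on J)"
proof -
  obtain xs where xs: "set xs = J"
    using assms finite_list by blast
  have "inj_on (\<lambda>m. map m xs) (exponents_on J)"
    by (rule inj_onI) (auto simp: exponents_on_def fun_eq_iff xs[symmetric])
  then show ?thesis
    by (rule countable_image_inj_on[rotated]) simp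
qed

lemma countable_rat_poly_values:
  assumes "finite J"
  shows "countable (rat_poly_values J x)"
proof -
  let ?T = "{T. finite T \<and> T \<subseteq> exponents_on J \<times> (UNIV :: rat set)}"
  let ?val = "\<lambda>T. \<Sum>(m, r)\<in>T. of_rat r * monomial_value J x m"
  have "countable ?T"
    using countable_exponents_on[OF assms] by (intro countable_Collect_finite_subset) auto
  moreover have "rat_poly_values J x \<subseteq> ?val ` ?T"
  proof
    fix v assume "v \<in> rat_poly_values J x"
    then obtain M c where v: "v = (\<Sum>m\<in>M. of_rat (c m) * monomial_value J x m)"
      and M: "finite M" "M \<subseteq> exponents_on J"
      unfolding rat_poly_values_def by blast
    have "inj_on (\<lambda>m. (m, c m)) M"
      by (auto intro: inj_onI)
    then have "?val ((\<lambda>m. (m, c m)) ` M) = v"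
      by (simp add: sum.reindex v)
    moreover have "(\<lambda>m. (m, c m)) ` M \<in> ?T"
      using M by auto
    ultimately show "v \<in> ?val ` ?T" by blast
  qed
  ultimately show ?thesis
    by (meson countable_image countable_subset)
qed

lemma countable_roots_of_polys_with_coeffs_in:
  fixes F :: "'a::idom set"
  assumes "countable F"
  shows "countable {t. \<exists>p. p \<noteq> 0 \<and> (\<forall>n. coeff p n \<in> F) \<and> poly p t = 0}"
proof -
  let ?P = "{p. \<forall>n. coeff p n \<in> F}"
  have "countable ?P"
  proof (cases "0 \<in> F")
    case True
    then have "coeffs ` ?P \<subseteq> lists F"
      by (auto simp: forall_coeffs_conv[where P = "\<lambda>c. c \<in> F"])
    then have "countable (coeffs ` ?P)"
      using assms countable_lists countable_subset by blast
    then show ?thesis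
      by (rule countable_image_inj_on) (meson coeffs_eq_iff inj_onI)
  next
    case False
    then have "?P = {}"
      by (metis (mono_tags, lifting) coeff_eq_0 empty_Collect_eq lessI)
    then show ?thesis
      by (metis countable_empty)
  qed
  moreover have "{t. \<exists>p. p \<noteq> 0 \<and> (\<forall>n. coeff p n \<in> F) \<and> poly p t = 0} =
      (\<Union>p\<in>?P - {0}. {t. poly p t = 0})"
    by auto
  ultimately show ?thesis
    by (auto intro: countable_finite poly_roots_finite)
qed

lemma alg_indep_over_rat_insert:
  assumes J: "finite J" and k: "k \<notin> J" and indep: "alg_indep_over_rat J x"
    and transcendental:
      "\<And>p. p \<noteq> 0 \<Longrightarrow> \<forall>n. coeff p n \<in> rat_poly_values J x \<Longrightarrow> poly p (x k) \<noteq> 0"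
  shows "alg_indep_over_rat (insert k J) x"
  \<comment> \<open>A relation over \<open>insert k J\<close> is a polynomial in \<open>x k\<close> whose coefficients are
    relations over J: transcendence of \<open>x k\<close> makes them vanish, independence over J
    then makes every rational coefficient vanish.\<close>
  unfolding alg_indep_over_rat_iff[OF finite.insertI[OF J]]
proof (intro allI impI)
  fix M and c :: "('a \<Rightarrow> nat) \<Rightarrow> rat"
  assume rel: "finite M \<and> M \<subseteq> exponents_on (insert k J) \<and>
    (\<Sum>m\<in>M. of_rat (c m) * monomial_value (insert k J) x m) = 0"
  have indep_J: "\<forall>m\<in>M'. c' m = 0"
    if "finite M'" "M' \<subseteq> exponents_on J" "(\<Sum>m\<in>M'. of_rat (c' m) * monomial_value J x m) = 0"
    for M' c'
    using indep that unfolding alg_indep_over_rat_iff[OF J] by blast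
  have M_fin: "finite M"
    using rel by blast
  define strip where "strip m = m(k := 0)" for m :: "'a \<Rightarrow> nat"
  define fiber where "fiber n = strip ` {m\<in>M. m k = n}" for n
  define p where "p = (\<Sum>m\<in>M. monom (of_rat (c m) * monomial_value J x m) (m k))"
  have fiber_exponents: "fiber n \<subseteq> exponents_on J" "finite (fiber n)" for n
    using rel unfolding fiber_def strip_def exponents_on_def by auto
  have coeff_p: "coeff p n = (\<Sum>m\<in>fiber n. of_rat (c (m(k := n))) * monomial_value J x m)" for n
  proof -
    have "inj_on strip {m\<in>M. m k = n}"
      unfolding strip_def by (rule inj_onI) (metis (mono_tags) fun_upd_triv fun_upd_upd mem_Collect_eq)
    have "coeff p n = (\<Sum>m\<in>{m\<in>M. m k = n}. of_rat (c m) * monomial_value J x m)"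
      unfolding p_def coeff_sum coeff_monom using M_fin by (simp add: sum.inter_filter eq_commute)
    also have "\<dots> = (\<Sum>m\<in>{m\<in>M. m k = n}.
        of_rat (c ((strip m)(k := n))) * monomial_value J x (strip m))"
      using k by (intro sum.cong) (auto simp: strip_def monomial_value_fun_upd_exponent)
    also have "\<dots> = (\<Sum>m\<in>fiber n. of_rat (c (m(k := n))) * monomial_value J x m)"
      unfolding fiber_def using \<open>inj_on strip _\<close> by (simp add: sum.reindex)
    finally show ?thesis .
  qed
  have "poly p (x k) = (\<Sum>m\<in>M. of_rat (c m) * monomial_value (insert k J) x m)"
    unfolding p_def poly_sum poly_monom using J k by (simp add: monomial_value_insert mult_ac)
  with rel have "poly p (x k) = 0" by simp
  moreover have "coeff p n \<in> rat_poly_values J x" for n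
    unfolding coeff_p rat_poly_values_def using fiber_exponents[of n]
    by (intro CollectI exI[of _ "fiber n"] exI[of _ "\<lambda>m. c (m(k := n))"]) simp
  ultimately have "p = 0"
    using transcendental by blast
  show "\<forall>m\<in>M. c m = 0"
  proof
    fix m assume "m \<in> M"
    then have "strip m \<in> fiber (m k)"
      unfolding fiber_def by blast
    moreover have "(\<Sum>m'\<in>fiber (m k). of_rat (c (m'(k := m k))) * monomial_value J x m') = 0"
      using coeff_p[of "m k"] \<open>p = 0\<close> by simp
    ultimately have "c ((strip m)(k := m k)) = 0"
      using indep_J[of "fiber (m k)" "\<lambda>m'. c (m'(k := m k))"] fiber_exponents by blast
    then show "c m = 0"
      unfolding strip_def by simp
  qed
qed

lemma alg_indep_over_rat_extend_fun_upd:
  assumes J: "finite J" and k: "k \<notin> J" and indep: "alg_indep_over_rat J x"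
  shows "\<exists>t. alg_indep_over_rat (insert k J) (x(k := t))"
proof -
  let ?roots = "{t. \<exists>p. p \<noteq> 0 \<and> (\<forall>n. coeff p n \<in> rat_poly_values J x) \<and> poly p t = 0}"
  have "countable ?roots"
    by (intro countable_roots_of_polys_with_coeffs_in countable_rat_poly_values J)
  then have "?roots \<noteq> UNIV"
    using uncountable_UNIV_real by metis
  then obtain t where t: "t \<notin> ?roots"
    by blast
  have agree: "(x(k := t)) j = x j" if "j \<in> J" for j
    using k that by auto
  have "rat_poly_values J (x(k := t)) = rat_poly_values J x"
    unfolding rat_poly_values_def using monomial_value_cong[of J "x(k := t)" x] agree by simp
  moreover have "alg_indep_over_rat J (x(k := t))"
    using alg_indep_over_rat_cong[of J "x(k := t)" x] agree indep by simp
  ultimately show ?thesis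
    using J k t by (intro exI alg_indep_over_rat_insert) auto
qed

lemma alg_indep_over_rat_extend:
  assumes "finite K" "finite J" "J \<inter> K = {}" "alg_indep_over_rat J x"
  shows "\<exists>y. alg_indep_over_rat (J \<union> K) y \<and> (\<forall>j\<in>J. y j = x j)"
  using assms
proof (induction K rule: finite_induct)
  case empty
  then show ?case by auto
next
  case (insert k K)
  then obtain y where y: "alg_indep_over_rat (J \<union> K) y" "\<forall>j\<in>J. y j = x j"
    by auto
  have "k \<notin> J \<union> K" "finite (J \<union> K)"
    using insert by auto
  then obtain t where "alg_indep_over_rat (insert k (J \<union> K)) (y(k := t))"
    using alg_indep_over_rat_extend_fun_upd[OF _ _ y(1)] by blast
  moreover have "\<forall>j\<in>J. (y(k := t)) j = x j"
    using y insert by auto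
  ultimately show ?case by auto
qed

lemma generic_config_insert:
  fixes p :: "'a \<Rightarrow> real ^ 'd"
  assumes "finite V" "v \<notin> V" "generic_config V p"
  shows "\<exists>z. generic_config (insert v V) (p(v := z))"
proof -
  let ?J = "V \<times> (UNIV :: 'd set)" and ?K = "{v} \<times> (UNIV :: 'd set)"
  have "finite ?K" "finite ?J" "?J \<inter> ?K = {}"
    using assms(1,2) by auto
  then obtain y where y: "alg_indep_over_rat (?J \<union> ?K) y" "\<forall>j\<in>?J. y j = (\<lambda>(u, i). p u $ i) j"
    using alg_indep_over_rat_extend assms(3)[unfolded generic_config_def] by blast
  have "insert v V \<times> (UNIV :: 'd set) = ?J \<union> ?K"
    by auto
  moreover have "(\<lambda>(u, i). (p(v := \<chi> i. y (v, i))) u $ i) j = y j" if "j \<in> ?J \<union> ?K" for j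
    using that y(2) assms(2) by auto
  ultimately have "generic_config (insert v V) (p(v := \<chi> i. y (v, i)))"
    unfolding generic_config_def using alg_indep_over_rat_cong y(1) by metis
  then show ?thesis ..
qed

lemma reflection_exchanging_points:
  fixes a b :: "'a::real_inner"
  shows "\<exists>R. (\<forall>x y. dist (R x) (R y) = dist x y) \<and> R a = b \<and>
    (\<forall>x. dist x a = dist x b \<longrightarrow> R x = x)"
proof (cases "a = b")
  case True
  then show ?thesis
    by (intro exI[of _ id]) auto
next
  case False
  define n where "n = a - b"
  define R where "R x = x - (((2 *\<^sub>R x - (a + b)) \<bullet> n) / (n \<bullet> n)) *\<^sub>R n" for x
  have nn: "n \<bullet> n \<noteq> 0"
    using False unfolding n_def by simp
  have "dist (R x) (R y) = dist x y" for x y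
  proof -
    define v where "v = x - y"
    define c where "c = 2 * (v \<bullet> n) / (n \<bullet> n)"
    have "R x - R y = v - c *\<^sub>R n"
      unfolding R_def c_def v_def
      by (simp add: inner_diff_left algebra_simps diff_divide_distrib)
    then have "(norm (R x - R y))\<^sup>2 = (norm (v - c *\<^sub>R n))\<^sup>2"
      by simp
    also have "\<dots> = (norm v)\<^sup>2 - 2 * c * (v \<bullet> n) + c\<^sup>2 * (n \<bullet> n)"
      unfolding power2_norm_eq_inner
      by (simp add: inner_diff_left inner_diff_right inner_commute power2_eq_square algebra_simps)
    also have "\<dots> = (norm v)\<^sup>2"
      unfolding c_def using nn by (simp add: power2_eq_square field_simps)
    finally show ?thesis
      by (simp add: dist_norm v_def)
  qed
  moreover have "R a = b"
  proof -
    have "2 *\<^sub>R a - (a + b) = n"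
      unfolding n_def by (simp add: scaleR_2)
    then show ?thesis
      unfolding R_def using nn by simp (simp add: n_def)
  qed
  moreover have "R x = x" if "dist x a = dist x b" for x
  proof -
    have "(norm (x - a))\<^sup>2 = (norm (x - b))\<^sup>2"
      using that by (simp add: dist_norm)
    then have "(2 *\<^sub>R x - (a + b)) \<bullet> n = 0"
      unfolding n_def power2_norm_eq_inner
      by (simp add: inner_diff_left inner_diff_right inner_add_left inner_add_right inner_commute
          scaleR_2 algebra_simps)
    then show ?thesis
      unfolding R_def by simp
  qed
  ultimately show ?thesis
    by blast
qed

lemma isometry_extends_finite_congruence:
  fixes a b :: "'i \<Rightarrow> 'a::real_inner"
  assumes "finite H" "\<forall>h\<in>H. \<forall>k\<in>H. dist (a h) (a k) = dist (b h) (b k)"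
  shows "\<exists>g. (\<forall>x y. dist (g x) (g y) = dist x y) \<and> (\<forall>h\<in>H. g (a h) = b h)"
  using assms
proof (induction H rule: finite_induct)
  case empty
  then show ?case
    by (intro exI[of _ id]) auto
next
  case (insert h H)
  then obtain g where g: "\<forall>x y. dist (g x) (g y) = dist x y" "\<forall>k\<in>H. g (a k) = b k"
    by auto
  obtain R where R: "\<forall>x y. dist (R x) (R y) = dist x y" "R (g (a h)) = b h"
      "\<forall>x. dist x (g (a h)) = dist x (b h) \<longrightarrow> R x = x"
    using reflection_exchanging_points by blast
  have "R (b k) = b k" if "k \<in> H" for k
  proof -
    have "dist (b k) (g (a h)) = dist (g (a k)) (g (a h))"
      using g that by simp
    also have "\<dots> = dist (a k) (a h)"
      using g by simp
    also have "\<dots> = dist (b k) (b h)"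
      using insert.prems that by simp
    finally show ?thesis
      using R by blast
  qed
  then show ?case
    using g R by (intro exI[of _ "R \<circ> g"]) auto
qed

lemma globally_rigid_of_clique_cone:
  fixes p :: "'a \<Rightarrow> real ^ 'd"
  assumes E: "\<Union>E \<subseteq> V" and H: "finite H" "H \<subseteq> V" "is_clique E H" and v': "v' \<notin> V"
    and rigid: "globally_rigid (insert v' V) (E \<union> {{v', h} | h. h \<in> H}) (p(v' := z))"
  shows "globally_rigid V E p"
  unfolding globally_rigid_def
proof (intro allI impI)
  fix q :: "'a \<Rightarrow> real ^ 'd"
  assume equiv: "equivalent_frameworks E p q"
  then have "\<forall>h\<in>H. \<forall>k\<in>H. dist (p h) (p k) = dist (q h) (q k)"
    using H(3) unfolding is_clique_def equivalent_frameworks_def by (metis dist_self)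
  then obtain g where g: "\<forall>x y. dist (g x) (g y) = dist x y" "\<forall>h\<in>H. g (p h) = q h"
    using isometry_extends_finite_congruence[OF H(1)] by blast
  have cone_edge: "dist z (p h) = dist (g z) (q h)" if "h \<in> H" for h
    using g that by metis
  have "equivalent_frameworks (E \<union> {{v', h} | h. h \<in> H}) (p(v' := z)) (q(v' := g z))"
    unfolding equivalent_frameworks_def
  proof (intro allI impI)
    fix u w
    assume "{u, w} \<in> E \<union> {{v', h} | h. h \<in> H}"
    then consider "{u, w} \<in> E" | h where "h \<in> H" "u = v'" "w = h" | h where "h \<in> H" "u = h" "w = v'"
      by (auto simp: doubleton_eq_iff)
    then show "dist ((p(v' := z)) u) ((p(v' := z)) w) = dist ((q(v' := g z)) u) ((q(v' := g z)) w)"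
    proof cases
      case 1
      then have "u \<in> V" "w \<in> V"
        using E by blast+
      with 1 v' equiv show ?thesis
        unfolding equivalent_frameworks_def by auto
    next
      case (2 h)
      then show ?thesis
        using cone_edge H(2) v' by auto
    next
      case (3 h)
      then show ?thesis
        using cone_edge H(2) v' by (auto simp: dist_commute)
    qed
  qed
  then have "congruent_frameworks (insert v' V) (p(v' := z)) (q(v' := g z))"
    using rigid unfolding globally_rigid_def by blast
  then show "congruent_frameworks V p q"
    unfolding congruent_frameworks_def using v' by (metis fun_upd_other insertCI)
qed

theorem proposition8:
  fixes V :: "'a set" and E :: "'a set set" and H :: "'a set" and v' :: 'a
  assumes "simple_graph V E"
    and "H \<subseteq> V" and "is_clique E H"
    and "v' \<notin> V"
    and "gen_globally_rigid (insert v' V) (E \<union> {{v', h} | h. h \<in> H}) TYPE('d::finite)"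
  shows "gen_globally_rigid V E TYPE('d)"
  unfolding gen_globally_rigid_def
proof (intro allI impI)
  fix p :: "'a \<Rightarrow> real ^ 'd"
  assume "generic_config V p"
  have V: "finite V" and E: "\<Union>E \<subseteq> V"
    using assms(1) unfolding simple_graph_def by auto
  obtain z where "generic_config (insert v' V) (p(v' := z))"
    using generic_config_insert[OF V assms(4) \<open>generic_config V p\<close>] by blast
  then have "globally_rigid (insert v' V) (E \<union> {{v', h} | h. h \<in> H}) (p(v' := z))"
    using assms(5) unfolding gen_globally_rigid_def by blast
  then show "globally_rigid V E p"
    using globally_rigid_of_clique_cone[OF E finite_subset[OF assms(2) V] assms(2-4)] by blast
qed

end
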